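(* Let $P$ be a subsemigroup of a group $Q$ and let $(X,P,T)$ be a directed semigroup action. Then $G(X,P,T)=\{(x,q,y)\in X\times Q\times X:\exists m,n\in P,\ q=mn^{-1},\ x\in U(m),\ y\in U(n),\ x\cdot m=y\cdot n\}$ is a subgroupoid of $X\times Q\times X$, the latter equipped with its natural groupoid structure over $X$: $(x,q,y)(y,q',z)=(x,qq',z)$ and $(x,q,y)^{-1}=(y,q^{-1},x)$.
   Context: $P\subset Q$, $PP\subset P$, $e\in P$. A right (partial) action of $P$ on a set $X$ is a subset $X*P\subset X\times P$ and a map $(x,m)\mapsto x\cdot m$ on $X*P$ such that $(x,e)\in X*P$ with $x\cdot e=x$ for all $x$, and for all $x,m,n$: $(x,mn)\in X*P$ iff $(x,m)\in X*P$ and $(x\cdot m,n)\in X*P$, in which case $(x\cdot m)\cdot n=x\cdot(mn)$. $U(m)=\{x:(x,m)\in X*P\}$. $m\le n$ iff $n=mp$ for some $p\in P$. The action is directed if for all $m,n\in P$ with $U(m)\cap U(n)\neq\emptyset$ there is $r\in P$ with $m\le r$, $n\le r$ and $U(m)\cap U(n)=U(r)$. *)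

theory Defs
  imports "HOL-Algebra.Group"
begin

text \<open>A right partial action of the monoid P (a subset of the group Q containing the unit)
on the set X: domain D (the set X*P) and action map act.\<close>
definition partial_action ::
  "('q, 'b) monoid_scheme \<Rightarrow> 'q set \<Rightarrow> 'x set \<Rightarrow> ('x \<times> 'q) set \<Rightarrow> ('x \<Rightarrow> 'q \<Rightarrow> 'x) \<Rightarrow> bool" where
  "partial_action Q P X D act \<longleftrightarrow>
     D \<subseteq> X \<times> P \<and>
     (\<forall>(x, m) \<in> D. act x m \<in> X) \<and>
     (\<forall>x\<in>X. (x, \<one>\<^bsub>Q\<^esub>) \<in> D \<and> act x \<one>\<^bsub>Q\<^esub> = x) \<and>
     (\<forall>x\<in>X. \<forall>m\<in>P. \<forall>n\<in>P.
        ((x, m \<otimes>\<^bsub>Q\<^esub> n) \<in> D \<longleftrightarrow> (x, m) \<in> D \<and> (act x m, n) \<in> D) \<and>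
        ((x, m \<otimes>\<^bsub>Q\<^esub> n) \<in> D \<longrightarrow> act (act x m) n = act x (m \<otimes>\<^bsub>Q\<^esub> n)))"

definition dom_U :: "'x set \<Rightarrow> ('x \<times> 'q) set \<Rightarrow> 'q \<Rightarrow> 'x set" where
  "dom_U X D m = {x \<in> X. (x, m) \<in> D}"

definition pleq :: "('q, 'b) monoid_scheme \<Rightarrow> 'q set \<Rightarrow> 'q \<Rightarrow> 'q \<Rightarrow> bool" where
  "pleq Q P m n \<longleftrightarrow> (\<exists>p\<in>P. n = m \<otimes>\<^bsub>Q\<^esub> p)"

definition directed_action ::
  "('q, 'b) monoid_scheme \<Rightarrow> 'q set \<Rightarrow> 'x set \<Rightarrow> ('x \<times> 'q) set \<Rightarrow> bool" where
  "directed_action Q P X D \<longleftrightarrow>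
     (\<forall>m\<in>P. \<forall>n\<in>P. dom_U X D m \<inter> dom_U X D n \<noteq> {} \<longrightarrow>
        (\<exists>r\<in>P. pleq Q P m r \<and> pleq Q P n r \<and> dom_U X D m \<inter> dom_U X D n = dom_U X D r))"

definition action_groupoid ::
  "('q, 'b) monoid_scheme \<Rightarrow> 'q set \<Rightarrow> 'x set \<Rightarrow> ('x \<times> 'q) set \<Rightarrow> ('x \<Rightarrow> 'q \<Rightarrow> 'x) \<Rightarrow> ('x \<times> 'q \<times> 'x) set" where
  "action_groupoid Q P X D act =
     {(x, q, y). x \<in> X \<and> q \<in> carrier Q \<and> y \<in> X \<and>
        (\<exists>m\<in>P. \<exists>n\<in>P. q = m \<otimes>\<^bsub>Q\<^esub> inv\<^bsub>Q\<^esub> n \<and> x \<in> dom_U X D m \<and> y \<in> dom_U X D n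
                     \<and> act x m = act y n)}"

end

theory Submission
  imports Defs
begin

text \<open>Closure under inverses is just the symmetry of the defining condition. For a
  composable pair \<open>(x, m n\<inverse>, y)\<close>, \<open>(y, m' n'\<inverse>, z)\<close> the point \<open>y\<close> lies in
  \<open>U(n) \<inter> U(m')\<close>, so directedness yields \<open>n p = m' p'\<close> with \<open>y \<in> U(n p)\<close>. Acting
  further by \<open>p\<close> and \<open>p'\<close> gives \<open>x\<cdot>(m p) = y\<cdot>(n p) = z\<cdot>(n' p')\<close>, and
  \<open>m n\<inverse> m' n'\<inverse> = (m p)(n' p')\<inverse>\<close> because \<open>n\<inverse> m' = p p'\<inverse>\<close>.\<close>

lemma (in group) m_inv_m_inv_eq_of_common_multiple:
  assumes "m \<in> carrier G" "n \<in> carrier G" "m' \<in> carrier G" "n' \<in> carrier G"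
    and "p \<in> carrier G" "p' \<in> carrier G"
    and "n \<otimes> p = m' \<otimes> p'"
  shows "(m \<otimes> inv n) \<otimes> (m' \<otimes> inv n') = (m \<otimes> p) \<otimes> inv (n' \<otimes> p')"
proof -
  have "m' = (m' \<otimes> p') \<otimes> inv p'"
    using assms(3,6) by (simp add: m_assoc)
  also have "\<dots> = n \<otimes> (p \<otimes> inv p')"
    using assms by (simp add: m_assoc flip: assms(7))
  finally have "inv n \<otimes> m' = p \<otimes> inv p'"
    using assms(1-6) by (simp add: m_assoc[symmetric])
  have "(m \<otimes> inv n) \<otimes> (m' \<otimes> inv n') = m \<otimes> (inv n \<otimes> m') \<otimes> inv n'"
    using assms by (simp add: m_assoc)
  also have "\<dots> = m \<otimes> (p \<otimes> inv p') \<otimes> inv n'"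
    using \<open>inv n \<otimes> m' = p \<otimes> inv p'\<close> by simp
  also have "\<dots> = (m \<otimes> p) \<otimes> inv (n' \<otimes> p')"
    using assms by (simp add: inv_mult_group m_assoc)
  finally show ?thesis .
qed

lemma partial_action_mem_mult_iff:
  assumes "partial_action Q P X D act" "x \<in> X" "m \<in> P" "n \<in> P"
  shows "(x, m \<otimes>\<^bsub>Q\<^esub> n) \<in> D \<longleftrightarrow> (x, m) \<in> D \<and> (act x m, n) \<in> D"
  using assms unfolding partial_action_def by simp

lemma partial_action_act_mult:
  assumes "partial_action Q P X D act" "x \<in> X" "m \<in> P" "n \<in> P"
    and "(x, m \<otimes>\<^bsub>Q\<^esub> n) \<in> D"
  shows "act x (m \<otimes>\<^bsub>Q\<^esub> n) = act (act x m) n"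
  using assms unfolding partial_action_def by simp

lemma partial_action_transfer_mult:
  assumes act: "partial_action Q P X D act" and "x \<in> X" "y \<in> X" "m \<in> P" "n \<in> P" "p \<in> P"
    and "(x, m) \<in> D" "(y, n \<otimes>\<^bsub>Q\<^esub> p) \<in> D" "act x m = act y n"
  shows "(x, m \<otimes>\<^bsub>Q\<^esub> p) \<in> D" "act x (m \<otimes>\<^bsub>Q\<^esub> p) = act y (n \<otimes>\<^bsub>Q\<^esub> p)"
proof -
  have "(act x m, p) \<in> D"
    using partial_action_mem_mult_iff[OF act assms(3,5,6)] assms(8,9) by simp
  then show x_mp: "(x, m \<otimes>\<^bsub>Q\<^esub> p) \<in> D"
    using partial_action_mem_mult_iff[OF act assms(2,4,6)] assms(7) by simp
  show "act x (m \<otimes>\<^bsub>Q\<^esub> p) = act y (n \<otimes>\<^bsub>Q\<^esub> p)"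
    using partial_action_act_mult[OF act assms(2,4,6) x_mp]
      partial_action_act_mult[OF act assms(3,5,6,8)] assms(9) by simp
qed

lemma mem_action_groupoidI:
  assumes "q \<in> carrier Q" "x \<in> X" "y \<in> X" "m \<in> P" "n \<in> P"
    and "q = m \<otimes>\<^bsub>Q\<^esub> inv\<^bsub>Q\<^esub> n" "(x, m) \<in> D" "(y, n) \<in> D" "act x m = act y n"
  shows "(x, q, y) \<in> action_groupoid Q P X D act"
  using assms unfolding action_groupoid_def dom_U_def by blast

lemma mem_action_groupoidE:
  assumes "(x, q, y) \<in> action_groupoid Q P X D act"
  obtains m n where "q \<in> carrier Q" "x \<in> X" "y \<in> X" "m \<in> P" "n \<in> P"
    "q = m \<otimes>\<^bsub>Q\<^esub> inv\<^bsub>Q\<^esub> n" "(x, m) \<in> D" "(y, n) \<in> D" "act x m = act y n"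
  using assms unfolding action_groupoid_def dom_U_def by blast

lemma action_groupoid_subset:
  "action_groupoid Q P X D act \<subseteq> X \<times> carrier Q \<times> X"
  unfolding action_groupoid_def by auto

lemma action_groupoid_inv_closed:
  assumes "group Q" "P \<subseteq> carrier Q"
    and "(x, q, y) \<in> action_groupoid Q P X D act"
  shows "(y, inv\<^bsub>Q\<^esub> q, x) \<in> action_groupoid Q P X D act"
proof -
  interpret group Q by fact
  from assms(3) obtain m n where mn: "q \<in> carrier Q" "x \<in> X" "y \<in> X" "m \<in> P" "n \<in> P"
      "q = m \<otimes>\<^bsub>Q\<^esub> inv\<^bsub>Q\<^esub> n" "(x, m) \<in> D" "(y, n) \<in> D" "act x m = act y n"
    by (rule mem_action_groupoidE)
  have mn_carrier: "m \<in> carrier Q" "n \<in> carrier Q"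
    using mn(4,5) assms(2) by auto
  then have "inv\<^bsub>Q\<^esub> q = n \<otimes>\<^bsub>Q\<^esub> inv\<^bsub>Q\<^esub> m"
    by (simp add: mn(6) inv_mult_group)
  with mn(1-5,7-9) mn_carrier show ?thesis
    by (intro mem_action_groupoidI[where m = n and n = m]) auto
qed

lemma action_groupoid_mult_closed:
  assumes "group Q" "P \<subseteq> carrier Q"
    and P_mult: "\<And>m n. m \<in> P \<Longrightarrow> n \<in> P \<Longrightarrow> m \<otimes>\<^bsub>Q\<^esub> n \<in> P"
    and act: "partial_action Q P X D act" and dir: "directed_action Q P X D"
    and "(x, q, y) \<in> action_groupoid Q P X D act"
    and "(y, q', z) \<in> action_groupoid Q P X D act"
  shows "(x, q \<otimes>\<^bsub>Q\<^esub> q', z) \<in> action_groupoid Q P X D act"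
proof -
  interpret group Q by fact
  from assms(6) obtain m n where mn: "q \<in> carrier Q" "x \<in> X" "y \<in> X" "m \<in> P" "n \<in> P"
      "q = m \<otimes>\<^bsub>Q\<^esub> inv\<^bsub>Q\<^esub> n" "(x, m) \<in> D" "(y, n) \<in> D" "act x m = act y n"
    by (rule mem_action_groupoidE)
  from assms(7) obtain m' n' where mn': "q' \<in> carrier Q" "z \<in> X" "m' \<in> P" "n' \<in> P"
      "q' = m' \<otimes>\<^bsub>Q\<^esub> inv\<^bsub>Q\<^esub> n'" "(y, m') \<in> D" "(z, n') \<in> D" "act y m' = act z n'"
    by (rule mem_action_groupoidE)
  have "y \<in> dom_U X D n \<inter> dom_U X D m'"
    using mn mn' unfolding dom_U_def by blast
  then obtain p p' where p: "p \<in> P" "p' \<in> P" "n \<otimes>\<^bsub>Q\<^esub> p = m' \<otimes>\<^bsub>Q\<^esub> p'"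
      and y_np: "(y, n \<otimes>\<^bsub>Q\<^esub> p) \<in> D"
    using dir mn(5) mn'(3) unfolding directed_action_def pleq_def dom_U_def by blast
  have y_mp: "(y, m' \<otimes>\<^bsub>Q\<^esub> p') \<in> D"
    using y_np p(3) by simp
  note x_transfer = partial_action_transfer_mult[OF act mn(2-5) p(1) mn(7) y_np mn(9)]
  note z_transfer = partial_action_transfer_mult[OF act mn'(2) mn(3) mn'(4,3) p(2) mn'(7) y_mp
      mn'(8)[symmetric]]
  have "act x (m \<otimes>\<^bsub>Q\<^esub> p) = act y (n \<otimes>\<^bsub>Q\<^esub> p)"
    by (fact x_transfer(2))
  also have "\<dots> = act z (n' \<otimes>\<^bsub>Q\<^esub> p')"
    using z_transfer(2) p(3) by simp
  finally have "act x (m \<otimes>\<^bsub>Q\<^esub> p) = act z (n' \<otimes>\<^bsub>Q\<^esub> p')" .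
  moreover have "m \<otimes>\<^bsub>Q\<^esub> p \<in> P" "n' \<otimes>\<^bsub>Q\<^esub> p' \<in> P"
    using P_mult mn(4) mn'(4) p by auto
  moreover have "q \<otimes>\<^bsub>Q\<^esub> q' = (m \<otimes>\<^bsub>Q\<^esub> p) \<otimes>\<^bsub>Q\<^esub> inv\<^bsub>Q\<^esub> (n' \<otimes>\<^bsub>Q\<^esub> p')"
    using m_inv_m_inv_eq_of_common_multiple mn mn' p assms(2) by (simp add: subset_iff)
  ultimately show ?thesis
    using mn(1-5,7-9) mn'(1-4,6-8) x_transfer(1) z_transfer(1) assms(2)
    by (intro mem_action_groupoidI[where m = "m \<otimes>\<^bsub>Q\<^esub> p" and n = "n' \<otimes>\<^bsub>Q\<^esub> p'"]) (auto simp: subset_iff)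
qed

theorem lemma5p5:
  fixes Q :: "('q, 'b) monoid_scheme" and P :: "'q set" and X :: "'x set"
    and D :: "('x \<times> 'q) set" and act :: "'x \<Rightarrow> 'q \<Rightarrow> 'x"
  assumes "group Q"
    and "P \<subseteq> carrier Q"
    and "\<And>m n. m \<in> P \<Longrightarrow> n \<in> P \<Longrightarrow> m \<otimes>\<^bsub>Q\<^esub> n \<in> P"
    and "\<one>\<^bsub>Q\<^esub> \<in> P"
    and "partial_action Q P X D act"
    and "directed_action Q P X D"
  shows "action_groupoid Q P X D act \<subseteq> X \<times> carrier Q \<times> X
    \<and> (\<forall>x q y. (x, q, y) \<in> action_groupoid Q P X D act \<longrightarrow>
          (y, inv\<^bsub>Q\<^esub> q, x) \<in> action_groupoid Q P X D act)
    \<and> (\<forall>x q y q' z. (x, q, y) \<in> action_groupoid Q P X D act \<longrightarrow>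
          (y, q', z) \<in> action_groupoid Q P X D act \<longrightarrow>
          (x, q \<otimes>\<^bsub>Q\<^esub> q', z) \<in> action_groupoid Q P X D act)"
  by (intro conjI allI impI action_groupoid_subset action_groupoid_inv_closed[OF assms(1,2)]
      action_groupoid_mult_closed[OF assms(1-3,5,6)])

end
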